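(* Let $v$ satisfy the standing assumptions and the doubling condition. Let $u(z)=\operatorname{Re}\sum_k a_{n_k}z^{n_k}$ be a Hadamard gap series converging in $\mathbb{D}$, i.e. $n_k$ positive integers with $n_{k+1}\ge\lambda n_k$ for some $\lambda>1$. Then $u\in k^\infty_v$ if and only if $u\in h^\infty_v$.
   Context: Standing assumptions: $v:[0,1)\to[1,\infty)$ is positive, increasing, continuous, $v(0)=1$, $\lim_{r\to1}v(r)=+\infty$. Doubling condition: there is $D\ge1$ with $v(1-d)\le D\,v(1-2d)$ for all $d\in(0,1/2]$. $k^\infty_v$ is the set of real harmonic $u$ on $\mathbb{D}$ with $u(z)\le Kv(|z|)$ for some $K>0$; $h^\infty_v$ is the set of real harmonic $u$ on $\mathbb{D}$ with $|u(z)|\le Kv(|z|)$ for some $K>0$. *)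

theory Defs
  imports "HOL-Analysis.Analysis"
begin

definition harmonic_on :: "complex set \<Rightarrow> (complex \<Rightarrow> real) \<Rightarrow> bool" where
  "harmonic_on S u \<longleftrightarrow> open S \<and>
     (\<exists>ux uy uxx uxy uyx uyy.
        (\<forall>z\<in>S. (u has_derivative (\<lambda>h. Re h * ux z + Im h * uy z)) (at z)) \<and>
        (\<forall>z\<in>S. (ux has_derivative (\<lambda>h. Re h * uxx z + Im h * uxy z)) (at z)) \<and>
        (\<forall>z\<in>S. (uy has_derivative (\<lambda>h. Re h * uyx z + Im h * uyy z)) (at z)) \<and>
        continuous_on S uxx \<and> continuous_on S uxy \<and>
        continuous_on S uyx \<and> continuous_on S uyy \<and>
        (\<forall>z\<in>S. uxx z + uyy z = 0))"

definition k_inf :: "(real \<Rightarrow> real) \<Rightarrow> (complex \<Rightarrow> real) set" where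
  "k_inf v = {u. harmonic_on (ball 0 1) u \<and>
                 (\<exists>K>0. \<forall>z\<in>ball 0 1. u z \<le> K * v (norm z))}"

definition h_inf :: "(real \<Rightarrow> real) \<Rightarrow> (complex \<Rightarrow> real) set" where
  "h_inf v = {u. harmonic_on (ball 0 1) u \<and>
                 (\<exists>K>0. \<forall>z\<in>ball 0 1. \<bar>u z\<bar> \<le> K * v (norm z))}"

definition weight :: "(real \<Rightarrow> real) \<Rightarrow> bool" where
  "weight v \<longleftrightarrow> (\<forall>r\<in>{0..<1}. v r > 0) \<and> mono_on {0..<1} v \<and>
     continuous_on {0..<1} v \<and> v 0 = 1 \<and> filterlim v at_top (at_left 1)"

definition doubling :: "(real \<Rightarrow> real) \<Rightarrow> bool" where
  "doubling v \<longleftrightarrow> (\<exists>D\<ge>1. \<forall>d\<in>{0<..1/2}. v (1 - d) \<le> D * v (1 - 2 * d))"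

end

theory Submission
  imports Defs
begin

text \<open>
  Let u = Re f with f(z) = sum a_k z^(n_k) a Hadamard gap
  series, and suppose u \<le> K v(|z|).  Fix a radius r and write z = r e^(ix).  For a set of
  frequencies s_0 < s_1 < ... in which each s_t exceeds the sum of the previous ones, the
  Riesz product P(x) = prod_l (1 + Re (c_l e^(i s_l x))) with |c_l| \<le> 1 is nonnegative, has
  mean 1, and its Fourier coefficient at s_l is cnj c_l / 2.  Averaging P u over the circle
  (discretely, over roots of unity) with c_l = sgn a_(k_l) gives
    (1/2) sum_l |a_(k_l)| r^(n_(k_l)) \<le> sup_x u(r e^(ix)) \<le> K v(r).
  A gap sequence splits into q arithmetic progressions of indices along which the
  frequencies are dissociated in this sense, so sum_k |a_k| r^(n_k) \<le> 2 q K v(r), which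
  bounds |u| as well.
\<close>

text \<open>Fourier coefficients of the partial Riesz product of the first t factors, computed by
  the recursion that multiplication by one factor induces on the spectrum.\<close>
fun riesz_coeff :: "(nat \<Rightarrow> complex) \<Rightarrow> (nat \<Rightarrow> int) \<Rightarrow> nat \<Rightarrow> int \<Rightarrow> complex" where
  "riesz_coeff c s 0 g = (if g = 0 then 1 else 0)"
| "riesz_coeff c s (Suc t) g = riesz_coeff c s t g + c t / 2 * riesz_coeff c s t (g + s t)
     + cnj (c t) / 2 * riesz_coeff c s t (g - s t)"

definition riesz_prod :: "(nat \<Rightarrow> complex) \<Rightarrow> (nat \<Rightarrow> int) \<Rightarrow> nat \<Rightarrow> real \<Rightarrow> real" where
  "riesz_prod c s t x = (\<Prod>l<t. 1 + Re (c l * cis (of_int (s l) * x)))"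

lemma riesz_coeff_vanishes:
  assumes "\<forall>i. s i \<ge> 0" and "\<bar>g\<bar> > (\<Sum>i<t. s i)"
  shows "riesz_coeff c s t g = 0"
  using assms(2)
proof (induction t arbitrary: g)
  case 0
  then show ?case by simp
next
  case (Suc t)
  have "s t \<ge> 0" using assms(1) by auto
  then have "riesz_coeff c s t g = 0" "riesz_coeff c s t (g + s t) = 0"
    "riesz_coeff c s t (g - s t) = 0"
    using Suc by (auto intro!: Suc.IH)
  then show ?case by simp
qed

lemma riesz_coeff_zero:
  assumes "\<forall>i. s i \<ge> 0" and "\<forall>t. (\<Sum>i<t. s i) < s t"
  shows "riesz_coeff c s t 0 = 1"
proof (induction t)
  case 0
  then show ?case by simp
next
  case (Suc t)
  have "riesz_coeff c s t (s t) = 0" "riesz_coeff c s t (- s t) = 0"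
    using assms by (auto intro!: riesz_coeff_vanishes)
  then show ?case using Suc.IH by simp
qed

lemma riesz_coeff_selected:
  assumes s0: "\<forall>i. s i \<ge> 0" and lac: "\<forall>t. (\<Sum>i<t. s i) < s t"
    and sep: "\<forall>k. k \<noteq> i \<longrightarrow> (\<Sum>l<k. s l) < \<bar>s i - s k\<bar>"
  shows "i < t \<Longrightarrow> riesz_coeff c s t (s i) = cnj (c i) / 2"
proof (induction t)
  case 0
  then show ?case by simp
next
  case (Suc t)
  have lac_t: "(\<Sum>l<t. s l) < s t" and st: "0 \<le> s t" using lac s0 by auto
  show ?case
  proof (cases "i = t")
    case True
    have "riesz_coeff c s t (s t) = 0" "riesz_coeff c s t (s t + s t) = 0"
      using lac_t st by (auto intro!: riesz_coeff_vanishes[OF s0])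
    then show ?thesis using True riesz_coeff_zero[OF s0 lac] by simp
  next
    case False
    then have "i < t" using Suc.prems by simp
    have "riesz_coeff c s t (s i - s t) = 0"
      using sep False by (intro riesz_coeff_vanishes[OF s0]) simp
    moreover have "riesz_coeff c s t (s i + s t) = 0"
      using lac_t s0[rule_format, of i] by (intro riesz_coeff_vanishes[OF s0]) simp
    ultimately show ?thesis using Suc.IH[OF \<open>i < t\<close>] by simp
  qed
qed

lemma riesz_coeff_unselected:
  assumes s0: "\<forall>i. s i \<ge> 0" and lac: "\<forall>t. (\<Sum>i<t. s i) < s t" and g: "g > 0"
  shows "(\<forall>k<t. (\<Sum>l<k. s l) < \<bar>g - s k\<bar>) \<Longrightarrow> riesz_coeff c s t g = 0"
proof (induction t)
  case 0
  then show ?case using g by simp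
next
  case (Suc t)
  have "riesz_coeff c s t (g - s t) = 0"
    using Suc.prems by (intro riesz_coeff_vanishes[OF s0]) simp
  moreover have "riesz_coeff c s t (g + s t) = 0"
    using lac g by (intro riesz_coeff_vanishes[OF s0]) (smt (verit))
  ultimately show ?case using Suc by simp
qed

text \<open>Multiplying by the factor 1 + Re (c t e^(i s t x)) shifts the spectrum by 0 and by
  s t and -(s t); this is the recursion defining the coefficients.\<close>
lemma riesz_prod_step:
  "complex_of_real (riesz_prod c s (Suc t) x) * cis (of_int g * x) =
     complex_of_real (riesz_prod c s t x) * cis (of_int g * x)
     + c t / 2 * (complex_of_real (riesz_prod c s t x) * cis (of_int (g + s t) * x))
     + cnj (c t) / 2 * (complex_of_real (riesz_prod c s t x) * cis (of_int (g - s t) * x))"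
proof -
  define A where "A = cis (of_int g * x)"
  define B where "B = cis (of_int (s t) * x)"
  have plus: "cis (of_int (g + s t) * x) = A * B"
    unfolding A_def B_def by (simp add: cis_mult distrib_right)
  have minus: "cis (of_int (g - s t) * x) = A * cnj B"
    unfolding A_def B_def by (simp add: cis_mult cis_cnj left_diff_distrib)
  have "complex_of_real (Re (c t * B)) = (c t * B + cnj (c t * B)) / 2"
    by (simp only: complex_add_cnj) simp
  then have factor: "complex_of_real (riesz_prod c s (Suc t) x)
      = complex_of_real (riesz_prod c s t x) * (1 + (c t * B + cnj (c t) * cnj B) / 2)"
    unfolding riesz_prod_def B_def by (simp add: complex_cnj_mult)
  show ?thesis unfolding plus minus factor A_def[symmetric] by (simp add: field_simps)
qed

lemma riesz_prod_nonneg: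
  assumes "\<forall>l. norm (c l) \<le> 1"
  shows "riesz_prod c s t x \<ge> 0"
  unfolding riesz_prod_def
proof (rule prod_nonneg)
  fix l
  have "\<bar>Re (c l * cis (of_int (s l) * x))\<bar> \<le> norm (c l * cis (of_int (s l) * x))"
    by (rule abs_Re_le_cmod)
  also have "\<dots> \<le> 1" using assms by (simp add: norm_mult)
  finally show "0 \<le> 1 + Re (c l * cis (of_int (s l) * x))" by linarith
qed

lemma roots_of_unity_sum:
  fixes N :: nat and g :: int
  assumes N: "N > 0" and g: "\<bar>g\<bar> < int N"
  shows "(\<Sum>i<N. cis (of_int g * (2 * pi * real i / real N))) = (if g = 0 then of_nat N else 0)"
proof (cases "g = 0")
  case True
  then show ?thesis by simp
next
  case False
  define w where "w = cis (2 * pi * of_int g / real N)"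
  have powers: "cis (of_int g * (2 * pi * real i / real N)) = w ^ i" for i
  proof -
    have "of_int g * (2 * pi * real i / real N) = real i * (2 * pi * of_int g / real N)" by simp
    then show ?thesis unfolding w_def Complex.DeMoivre by (simp only:)
  qed
  have "w ^ N = cis (2 * pi * of_int g)" unfolding w_def Complex.DeMoivre using N by simp
  then have wN: "w ^ N = 1" by (simp add: cis_multiple_2pi)
  have "w \<noteq> 1"
  proof
    assume "w = 1"
    then obtain k :: int where "2 * pi * of_int g / real N = of_int (2 * k) * pi"
      unfolding w_def cis_conv_exp exp_eq_1 by auto
    then have "g = int N * k" using N by (simp add: field_simps) (metis of_int_eq_iff of_int_mult of_int_of_nat_eq)
    then show False using g False by (cases "k = 0") (auto simp: abs_mult)
  qed
  then show ?thesis unfolding powers sum_gp_strict using wN False by simp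
qed

text \<open>Discrete Fourier coefficients of the Riesz product: averaging over N-th roots of unity
  recovers riesz_coeff exactly, as long as no aliasing occurs.\<close>
lemma riesz_prod_average:
  fixes N :: nat
  assumes N: "N > 0" and s0: "\<forall>i. s i \<ge> 0"
  shows "\<bar>g\<bar> + (\<Sum>l<t. s l) < int N \<Longrightarrow>
    (\<Sum>i<N. complex_of_real (riesz_prod c s t (2 * pi * real i / real N))
              * cis (of_int g * (2 * pi * real i / real N)))
      = of_nat N * riesz_coeff c s t g"
proof (induction t arbitrary: g)
  case 0
  then show ?case using roots_of_unity_sum[OF N] by (simp add: riesz_prod_def)
next
  case (Suc t)
  have "s t \<ge> 0" using s0 by simp
  then have "\<bar>g\<bar> + (\<Sum>l<t. s l) < int N" "\<bar>g + s t\<bar> + (\<Sum>l<t. s l) < int N"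
    "\<bar>g - s t\<bar> + (\<Sum>l<t. s l) < int N"
    using Suc.prems by auto
  note shifted = this[THEN Suc.IH]
  show ?case
    unfolding riesz_prod_step sum.distrib sum_distrib_left[symmetric] shifted riesz_coeff.simps(2)
    by (simp add: algebra_simps)
qed

lemma riesz_prod_mean:
  fixes N :: nat
  assumes N: "N > 0" and s0: "\<forall>i. s i \<ge> 0" and lac: "\<forall>k. (\<Sum>l<k. s l) < s k"
    and small: "(\<Sum>l<t. s l) < int N"
  shows "(\<Sum>i<N. riesz_prod c s t (2 * pi * real i / real N)) = real N"
proof -
  have "(\<Sum>i<N. complex_of_real (riesz_prod c s t (2 * pi * real i / real N))
          * cis (of_int 0 * (2 * pi * real i / real N))) = of_nat N * riesz_coeff c s t 0"
    using small by (intro riesz_prod_average[OF N s0]) simp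
  then have "complex_of_real (\<Sum>i<N. riesz_prod c s t (2 * pi * real i / real N)) = of_nat N"
    using riesz_coeff_zero[OF s0 lac] by simp
  then show ?thesis by (metis of_real_eq_iff of_real_of_nat_eq)
qed

lemma riesz_prod_test:
  fixes N :: nat and nn :: "nat \<Rightarrow> int" and b :: "nat \<Rightarrow> complex"
  defines "\<theta> \<equiv> \<lambda>i. 2 * pi * real i / real N"
  assumes N: "N > 0" and s0: "\<forall>i. s i \<ge> 0"
    and small: "\<forall>m<L. \<bar>nn m\<bar> + (\<Sum>l<t. s l) < int N"
  shows "(\<Sum>i<N. riesz_prod c s t (\<theta> i) * Re (\<Sum>m<L. b m * cis (of_int (nn m) * \<theta> i)))
       = real N * Re (\<Sum>m<L. b m * riesz_coeff c s t (nn m))"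
proof -
  have "(\<Sum>i<N. riesz_prod c s t (\<theta> i) * Re (\<Sum>m<L. b m * cis (of_int (nn m) * \<theta> i)))
      = Re (\<Sum>m<L. b m * (\<Sum>i<N. complex_of_real (riesz_prod c s t (\<theta> i))
                                    * cis (of_int (nn m) * \<theta> i)))"
    by (simp add: sum_distrib_left sum_distrib_right sum.swap[of _ "{..<N}"] mult_ac right_diff_distrib)
  also have "\<dots> = Re (\<Sum>m<L. b m * (of_nat N * riesz_coeff c s t (nn m)))"
    using small riesz_prod_average[OF N s0] unfolding \<theta>_def by simp
  finally show ?thesis by (simp add: sum_distrib_left mult_ac)
qed

lemma riesz_coeff_pairing:
  fixes nn :: "nat \<Rightarrow> int" and idx :: "nat \<Rightarrow> nat" and b :: "nat \<Rightarrow> complex"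
  defines "s \<equiv> \<lambda>i. nn (idx i)"
  assumes pos: "\<forall>m. nn m > 0" and lac: "\<forall>k. (\<Sum>l<k. s l) < s k"
    and sep: "\<forall>m k. m \<noteq> idx k \<longrightarrow> (\<Sum>l<k. s l) < \<bar>nn m - s k\<bar>"
    and inj: "inj idx" and sub: "idx ` {..<t} \<subseteq> {..<L}"
  shows "(\<Sum>m<L. b m * riesz_coeff c s t (nn m)) = (\<Sum>i<t. b (idx i) * (cnj (c i) / 2))"
proof -
  have s0: "\<forall>i. s i \<ge> 0" using pos unfolding s_def by (simp add: less_imp_le)
  have "(\<Sum>m<L. b m * riesz_coeff c s t (nn m)) = (\<Sum>m\<in>idx ` {..<t}. b m * riesz_coeff c s t (nn m))"
  proof (rule sum.mono_neutral_right)
    show "\<forall>m\<in>{..<L} - idx ` {..<t}. b m * riesz_coeff c s t (nn m) = 0"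
      using sep pos by (auto intro!: riesz_coeff_unselected[OF s0 lac])
  qed (use sub in auto)
  also have "\<dots> = (\<Sum>i<t. b (idx i) * riesz_coeff c s t (s i))"
    using inj unfolding s_def by (simp add: sum.reindex inj_on_subset)
  also have "\<dots> = (\<Sum>i<t. b (idx i) * (cnj (c i) / 2))"
  proof (rule sum.cong[OF refl])
    fix i assume "i \<in> {..<t}"
    moreover have "\<forall>k. k \<noteq> i \<longrightarrow> (\<Sum>l<k. s l) < \<bar>s i - s k\<bar>"
      using sep inj unfolding s_def by (auto simp: inj_eq)
    ultimately show "b (idx i) * riesz_coeff c s t (s i) = b (idx i) * (cnj (c i) / 2)"
      using riesz_coeff_selected[OF s0 lac] by simp
  qed
  finally show ?thesis .
qed

text \<open>Choosing c = sgn z rotates the coefficient z onto the positive real axis.\<close>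
lemma mult_cnj_sgn: "(z::complex) * cnj (sgn z) = complex_of_real (norm z)"
proof (cases "z = 0")
  case False
  have "z * cnj (sgn z) = z * cnj z / complex_of_real (norm z)"
    by (simp add: sgn_div_norm divide_inverse scaleR_conv_of_real mult.commute)
  also have "\<dots> = complex_of_real (norm z ^ 2) / complex_of_real (norm z)"
    by (simp only: complex_norm_square)
  also have "\<dots> = complex_of_real (norm z)" using False by (simp add: power2_eq_square)
  finally show ?thesis .
qed simp

text \<open>The test function is the nonnegative
  Riesz product with c i = sgn of the selected coefficient, averaged over roots of unity.\<close>
lemma riesz_inequality:
  fixes nn :: "nat \<Rightarrow> int" and idx :: "nat \<Rightarrow> nat" and b :: "nat \<Rightarrow> complex"
  assumes pos: "\<forall>m. nn m > 0" and lac: "\<forall>k. (\<Sum>l<k. nn (idx l)) < nn (idx k)"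
    and sep: "\<forall>m k. m \<noteq> idx k \<longrightarrow> (\<Sum>l<k. nn (idx l)) < \<bar>nn m - nn (idx k)\<bar>"
    and inj: "inj idx" and sub: "idx ` {..<t} \<subseteq> {..<L}"
    and ub: "\<forall>x. Re (\<Sum>m<L. b m * cis (of_int (nn m) * x)) \<le> B"
  shows "(\<Sum>i<t. norm (b (idx i))) \<le> 2 * B"
proof -
  define s where "s = (\<lambda>i. nn (idx i))"
  define c where "c = (\<lambda>i. sgn (b (idx i)))"
  define N where "N = nat (\<Sum>l<t. s l) + (\<Sum>m<L. nat (nn m)) + 1"
  define \<theta> where "\<theta> = (\<lambda>i::nat. 2 * pi * real i / real N)"
  define P where "P = (\<lambda>i. riesz_prod c s t (\<theta> i))"
  have s0: "\<forall>i. s i \<ge> 0" using pos unfolding s_def by (simp add: less_imp_le)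
  have lac': "\<forall>k. (\<Sum>l<k. s l) < s k" using lac unfolding s_def .
  have N0: "N > 0" unfolding N_def by simp
  have small: "\<forall>m<L. \<bar>nn m\<bar> + (\<Sum>l<t. s l) < int N"
  proof (intro allI impI)
    fix m assume "m < L"
    then have "nat (nn m) \<le> (\<Sum>m<L. nat (nn m))" by (intro member_le_sum) auto
    then have "\<bar>nn m\<bar> \<le> int (\<Sum>m<L. nat (nn m))" using pos[rule_format, of m] by linarith
    moreover have "(\<Sum>l<t. s l) \<ge> 0" using s0 by (simp add: sum_nonneg)
    ultimately show "\<bar>nn m\<bar> + (\<Sum>l<t. s l) < int N" unfolding N_def by simp
  qed
  have "0 \<le> (\<Sum>l<t. s l)" using s0 by (simp add: sum_nonneg)
  then have "(\<Sum>l<t. s l) < int N"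
    unfolding N_def of_nat_add of_nat_1 using of_nat_0_le_iff[of "\<Sum>m<L. nat (nn m)"] by linarith
  then have mean: "(\<Sum>i<N. P i) = real N"
    unfolding P_def \<theta>_def by (rule riesz_prod_mean[OF N0 s0 lac'])
  have P0: "P i \<ge> 0" for i
    unfolding P_def c_def by (rule riesz_prod_nonneg) (simp add: norm_sgn)
  have "real N * Re (\<Sum>m<L. b m * riesz_coeff c s t (nn m))
      = (\<Sum>i<N. P i * Re (\<Sum>m<L. b m * cis (of_int (nn m) * \<theta> i)))"
    unfolding P_def \<theta>_def by (rule riesz_prod_test[OF N0 s0 small, symmetric])
  also have "\<dots> \<le> (\<Sum>i<N. P i * B)"
    using ub P0 by (intro sum_mono mult_left_mono) auto
  also have "\<dots> = real N * B" using mean by (simp add: sum_distrib_right[symmetric])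
  finally have "Re (\<Sum>m<L. b m * riesz_coeff c s t (nn m)) \<le> B" using N0 by simp
  moreover have "Re (\<Sum>m<L. b m * riesz_coeff c s t (nn m)) = (\<Sum>i<t. norm (b (idx i))) / 2"
    unfolding s_def riesz_coeff_pairing[OF pos lac sep inj sub]
    by (simp add: c_def mult_cnj_sgn sum_divide_distrib)
  ultimately show ?thesis by simp
qed

lemma gap_growth:
  fixes n :: "nat \<Rightarrow> nat" and lam :: real
  assumes lam: "lam > 1" and gap: "\<forall>k. real (n (Suc k)) \<ge> lam * real (n k)"
  shows "real (n (k + d)) \<ge> lam ^ d * real (n k)"
proof (induction d)
  case 0
  then show ?case by simp
next
  case (Suc d)
  have "lam ^ Suc d * real (n k) = lam * (lam ^ d * real (n k))" by simp
  also have "\<dots> \<le> lam * real (n (k + d))" using Suc lam by (intro mult_left_mono) auto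
  also have "\<dots> \<le> real (n (k + Suc d))" using gap by simp
  finally show ?case .
qed

lemma gap_separation:
  fixes n :: "nat \<Rightarrow> nat" and lam :: real
  assumes lam: "lam > 1" and gap: "\<forall>k. real (n (Suc k)) \<ge> lam * real (n k)" and "m \<noteq> k"
  shows "real (n k) * (1 - 1 / lam) \<le> \<bar>real (n m) - real (n k)\<bar>"
proof -
  have jump: "lam * real (n i) \<le> real (n i')" if "i < i'" for i i'
  proof -
    obtain d where d: "i' = i + Suc d" using \<open>i < i'\<close> less_iff_Suc_add by auto
    have "lam * real (n i) \<le> lam ^ Suc d * real (n i)"
      using lam by (intro mult_right_mono) (auto simp: power_increasing[of 1, simplified])
    also have "\<dots> \<le> real (n (i + Suc d))" by (rule gap_growth[OF lam gap])
    also have "\<dots> = real (n i')" using d by simp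
    finally show ?thesis .
  qed
  show ?thesis
  proof (cases "k < m")
    case True
    have "0 \<le> (lam - 1) ^ 2" by simp
    then have "1 - 1 / lam \<le> lam - 1" using lam by (simp add: field_simps power2_eq_square)
    then have "real (n k) * (1 - 1 / lam) \<le> real (n k) * (lam - 1)" by (intro mult_left_mono) auto
    then show ?thesis using jump[OF True] by (simp add: algebra_simps)
  next
    case False
    then have "lam * real (n m) \<le> real (n k)" using jump \<open>m \<noteq> k\<close> by simp
    then have "real (n m) \<le> real (n k) / lam" using lam by (simp add: field_simps)
    then show ?thesis by (simp add: algebra_simps)
  qed
qed

lemma gap_block_sum:
  fixes n :: "nat \<Rightarrow> nat" and lam Q :: real
  assumes lam: "lam > 1" and gap: "\<forall>k. real (n (Suc k)) \<ge> lam * real (n k)"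
    and Q: "Q > 1" and q: "lam ^ q \<ge> Q"
  shows "(\<Sum>l<t. real (n (j + q * l))) \<le> real (n (j + q * t)) / (Q - 1)"
proof (induction t)
  case 0
  then show ?case using Q by simp
next
  case (Suc t)
  have "Q * real (n (j + q * t)) \<le> lam ^ q * real (n (j + q * t))"
    using q by (intro mult_right_mono) auto
  also have "\<dots> \<le> real (n (j + q * Suc t))"
    using gap_growth[OF lam gap, where k="j + q * t" and d=q] by (simp add: algebra_simps)
  finally have step: "Q * real (n (j + q * t)) \<le> real (n (j + q * Suc t))" .
  have "(\<Sum>l<Suc t. real (n (j + q * l))) \<le> real (n (j + q * t)) / (Q - 1) + real (n (j + q * t))"
    using Suc by simp
  also have "\<dots> = Q * real (n (j + q * t)) / (Q - 1)" using Q by (simp add: field_simps)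
  also have "\<dots> \<le> real (n (j + q * Suc t)) / (Q - 1)" using step Q by (intro divide_right_mono) auto
  finally show ?case .
qed

lemma gap_subsequence_dissociated:
  fixes n :: "nat \<Rightarrow> nat" and lam :: real
  assumes lam: "lam > 1" and gap: "\<forall>k. real (n (Suc k)) \<ge> lam * real (n k)"
    and pos: "\<forall>k. n k > 0" and q: "lam ^ q \<ge> 2 + lam / (lam - 1)"
  shows "(\<Sum>l<t. int (n (j + q * l))) < int (n (j + q * t))"
    and "m \<noteq> j + q * t \<Longrightarrow> (\<Sum>l<t. int (n (j + q * l))) < \<bar>int (n m) - int (n (j + q * t))\<bar>"
proof -
  define Q where "Q = 2 + lam / (lam - 1)"
  define x where "x = real (n (j + q * t))"
  have x: "x > 0" using pos unfolding x_def by simp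
  have Q1: "Q - 1 = (2 * lam - 1) / (lam - 1)" using lam unfolding Q_def by (simp add: field_simps)
  have "lam / (lam - 1) > 0" using lam by simp
  then have block: "(\<Sum>l<t. real (n (j + q * l))) \<le> x / (Q - 1)"
    unfolding x_def using gap_block_sum[OF lam gap _ q] by (simp add: Q_def)
  have "1 / (Q - 1) < 1 - 1 / lam"
  proof -
    have "1 / (Q - 1) = (lam - 1) / (2 * lam - 1)" using Q1 by simp
    also have "\<dots> < (lam - 1) / lam" using lam by (intro divide_strict_left_mono) auto
    also have "\<dots> = 1 - 1 / lam" using lam by (simp add: field_simps)
    finally show ?thesis .
  qed
  then have below: "x / (Q - 1) < x * (1 - 1 / lam)"
    using mult_strict_left_mono[OF _ x] by (simp add: divide_inverse)
  have "x * (1 - 1 / lam) \<le> x" using lam x by (simp add: field_simps)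
  have cast: "real_of_int (\<Sum>l<t. int (n (j + q * l))) = (\<Sum>l<t. real (n (j + q * l)))" by simp
  have "real_of_int (\<Sum>l<t. int (n (j + q * l))) < real_of_int (int (n (j + q * t)))"
    using \<open>x * (1 - 1 / lam) \<le> x\<close> block below unfolding cast x_def by simp
  then show "(\<Sum>l<t. int (n (j + q * l))) < int (n (j + q * t))" by (simp only: of_int_less_iff)
  assume "m \<noteq> j + q * t"
  from gap_separation[OF lam gap this] block below
  have "real_of_int (\<Sum>l<t. int (n (j + q * l))) < real_of_int \<bar>int (n m) - int (n (j + q * t))\<bar>"
    unfolding cast x_def by simp
  then show "(\<Sum>l<t. int (n (j + q * l))) < \<bar>int (n m) - int (n (j + q * t))\<bar>"
    by (simp only: of_int_less_iff)
qed

lemma partial_sum_Re_bound: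
  fixes f :: "nat \<Rightarrow> complex"
  assumes f: "summable (\<lambda>m. norm (f m))" and B: "Re (\<Sum>m. f m) \<le> B"
  shows "Re (\<Sum>m<L. f m) \<le> B + (\<Sum>m. norm (f (m + L)))"
proof -
  have split: "(\<Sum>m. f m) = (\<Sum>m. f (m + L)) + (\<Sum>m<L. f m)"
    by (rule suminf_split_initial_segment[OF summable_norm_cancel[OF f]])
  have "norm (\<Sum>m. f (m + L)) \<le> (\<Sum>m. norm (f (m + L)))"
    using summable_ignore_initial_segment[OF f] by (rule summable_norm)
  then have "- Re (\<Sum>m. f (m + L)) \<le> (\<Sum>m. norm (f (m + L)))"
    using abs_Re_le_cmod[of "\<Sum>m. f (m + L)"] by linarith
  then show ?thesis using B unfolding split by simp
qed

text \<open>Truncating the series with a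
  small tail reduces this to the finite Riesz-product inequality.\<close>
lemma gap_progression_bound:
  fixes n :: "nat \<Rightarrow> nat" and lam r B :: real and a :: "nat \<Rightarrow> complex"
  assumes lam: "lam > 1" and gap: "\<forall>k. real (n (Suc k)) \<ge> lam * real (n k)"
    and pos: "\<forall>k. n k > 0" and q: "lam ^ q \<ge> 2 + lam / (lam - 1)" and q0: "q > 0"
    and r: "0 \<le> r" and summ: "summable (\<lambda>m. norm (a m) * r ^ n m)"
    and ub: "\<forall>x. Re (\<Sum>m. a m * (complex_of_real r * cis x) ^ n m) \<le> B"
  shows "(\<Sum>i<t. norm (a (j + q * i)) * r ^ n (j + q * i)) \<le> 2 * B"
proof -
  define w where "w = (\<lambda>m. norm (a m) * r ^ n m)"
  define b where "b = (\<lambda>m. a m * complex_of_real (r ^ n m))"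
  define idx where "idx = (\<lambda>i. j + q * i)"
  define nn where "nn = (\<lambda>m. int (n m))"
  have terms: "a m * (complex_of_real r * cis x) ^ n m = b m * cis (of_int (nn m) * x)" for m x
    unfolding b_def nn_def by (simp add: power_mult_distrib Complex.DeMoivre)
  have norms: "norm (b m * cis (of_int (nn m) * x)) = w m" for m x
    unfolding b_def w_def using r by (simp add: norm_mult norm_power)
  have "(\<Sum>i<t. w (idx i)) / 2 \<le> B + e" if "e > 0" for e
  proof -
    obtain L0 where L0: "\<forall>L\<ge>L0. norm (\<Sum>m. w (m + L)) < e"
      using suminf_exist_split[OF \<open>e > 0\<close>] summ unfolding w_def by blast
    define L where "L = max L0 (j + q * t)"
    have "norm (\<Sum>m. w (m + L)) < e" using L0 unfolding L_def by simp
    then have tail: "(\<Sum>m. w (m + L)) < e" by (simp add: abs_less_iff)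
    have "\<forall>x. Re (\<Sum>m<L. b m * cis (of_int (nn m) * x)) \<le> B + e"
    proof
      fix x
      have "Re (\<Sum>m<L. b m * cis (of_int (nn m) * x)) \<le> B + (\<Sum>m. w (m + L))"
        using partial_sum_Re_bound[of "\<lambda>m. b m * cis (of_int (nn m) * x)" B L] ub summ
        unfolding terms norms w_def by simp
      then show "Re (\<Sum>m<L. b m * cis (of_int (nn m) * x)) \<le> B + e" using tail by linarith
    qed
    moreover have "idx ` {..<t} \<subseteq> {..<L}" unfolding idx_def L_def using q0 by (auto simp: less_max_iff_disj)
    moreover have "inj idx" unfolding idx_def using q0 by (auto intro!: injI)
    ultimately have "(\<Sum>i<t. norm (b (idx i))) \<le> 2 * (B + e)"
      using gap_subsequence_dissociated[OF lam gap pos q] pos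
      by (intro riesz_inequality[where nn = nn]) (auto simp: nn_def idx_def)
    moreover have "norm (b m) = w m" for m unfolding b_def w_def using r by (simp add: norm_mult norm_power)
    ultimately show ?thesis by simp
  qed
  then have "(\<Sum>i<t. w (idx i)) / 2 \<le> B" by (rule field_le_epsilon)
  then show ?thesis unfolding w_def idx_def by simp
qed

lemma sum_le_residue_classes:
  fixes w :: "nat \<Rightarrow> real"
  assumes "\<And>m. w m \<ge> 0" and "q > 0"
  shows "(\<Sum>m<M. w m) \<le> (\<Sum>j<q. \<Sum>i<M. w (j + q * i))"
proof -
  have "(\<Sum>m<M. w m) \<le> (\<Sum>m<M * q. w m)"
    using assms by (intro sum_mono2) auto
  also have "\<dots> = (\<Sum>i<M. \<Sum>m\<in>{i * q..<i * q + q}. w m)"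
    by (rule sum.nat_group[symmetric])
  also have "\<dots> = (\<Sum>i<M. \<Sum>j<q. w (j + q * i))"
  proof (rule sum.cong[OF refl])
    fix i
    have "(\<Sum>m\<in>{0 + i * q..<q + i * q}. w m) = (\<Sum>j\<in>{0..<q}. w (j + i * q))"
      by (rule sum.shift_bounds_nat_ivl)
    then show "(\<Sum>m\<in>{i * q..<i * q + q}. w m) = (\<Sum>j<q. w (j + q * i))"
      by (simp add: atLeast0LessThan add.commute mult.commute)
  qed
  also have "\<dots> = (\<Sum>j<q. \<Sum>i<M. w (j + q * i))" by (rule sum.swap)
  finally show ?thesis .
qed

lemma gap_series_abs_sum_bound:
  fixes n :: "nat \<Rightarrow> nat" and lam :: real
  assumes lam: "lam > 1" and gap: "\<forall>k. real (n (Suc k)) \<ge> lam * real (n k)"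
    and pos: "\<forall>k. n k > 0"
  obtains C :: real where "C > 0"
    and "\<And>a r B. 0 \<le> r \<Longrightarrow> summable (\<lambda>m. norm (a m) * r ^ n m) \<Longrightarrow>
           (\<forall>x. Re (\<Sum>m. a m * (complex_of_real r * cis x) ^ n m) \<le> B) \<Longrightarrow>
           (\<Sum>m. norm (a m) * r ^ n m) \<le> C * B"
proof -
  obtain q where q: "2 + lam / (lam - 1) < lam ^ q" using real_arch_pow[OF lam] by blast
  have "lam / (lam - 1) > 0" using lam by simp
  then have q0: "q > 0" using q by (cases q) auto
  have "(\<Sum>m. norm (a m) * r ^ n m) \<le> 2 * real q * B"
    if r: "0 \<le> r" and summ: "summable (\<lambda>m. norm (a m) * r ^ n m)"
      and ub: "\<forall>x. Re (\<Sum>m. a m * (complex_of_real r * cis x) ^ n m) \<le> B"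
    for a :: "nat \<Rightarrow> complex" and r B :: real
  proof (rule suminf_le_const[OF summ])
    fix M
    have "(\<Sum>m<M. norm (a m) * r ^ n m)
        \<le> (\<Sum>j<q. \<Sum>i<M. norm (a (j + q * i)) * r ^ n (j + q * i))"
      using r q0 by (intro sum_le_residue_classes) auto
    also have "\<dots> \<le> (\<Sum>j<q. 2 * B)"
      using q by (intro sum_mono gap_progression_bound[OF lam gap pos _ q0 r summ ub]) auto
    finally show "(\<Sum>m<M. norm (a m) * r ^ n m) \<le> 2 * real q * B" by simp
  qed
  moreover have "2 * real q > 0" using q0 by simp
  ultimately show thesis using that by blast
qed

text \<open>Inside the disc of convergence a gap series converges absolutely (compare with a
  geometric series at a slightly larger radius, using n k \<ge> k).\<close>
lemma gap_series_abs_summable: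
  fixes a :: "nat \<Rightarrow> complex" and n :: "nat \<Rightarrow> nat"
  assumes mono: "strict_mono n" and conv: "\<forall>z\<in>ball 0 1. summable (\<lambda>k. a k * z ^ n k)"
    and z: "norm z < 1"
  shows "summable (\<lambda>k. norm (a k) * norm z ^ n k)"
proof -
  define r where "r = norm z"
  define \<rho> where "\<rho> = (1 + r) / 2"
  have r: "0 \<le> r" "r < \<rho>" "\<rho> < 1" using z unfolding r_def \<rho>_def by auto
  then have "summable (\<lambda>k. a k * complex_of_real \<rho> ^ n k)" using conv by simp
  then have "Bseq (\<lambda>k. a k * complex_of_real \<rho> ^ n k)"
    by (intro convergent_imp_Bseq) (auto simp: convergent_def dest: summable_LIMSEQ_zero)
  then obtain M where M: "\<forall>k. norm (a k * complex_of_real \<rho> ^ n k) \<le> M" by (auto elim: BseqE)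
  define x where "x = r / \<rho>"
  have x: "0 \<le> x" "x < 1" unfolding x_def using r by auto
  have "summable (\<lambda>k. norm (a k) * r ^ n k)"
  proof (rule summable_comparison_test')
    show "summable (\<lambda>k. M * x ^ k)" using x by (intro summable_mult summable_geometric) simp
    fix k :: nat
    have "norm (norm (a k) * r ^ n k) = norm (a k) * \<rho> ^ n k * x ^ n k"
      unfolding x_def using r by (simp add: power_divide)
    also have "\<dots> \<le> M * x ^ n k"
      using M[rule_format, of k] x r by (intro mult_right_mono) (auto simp: norm_mult norm_power)
    also have "\<dots> \<le> M * x ^ k"
      using x order_trans[OF norm_ge_zero M[rule_format, of k]] seq_suble[OF mono, of k]
      by (intro mult_left_mono power_decreasing) auto
    finally show "norm (norm (a k) * r ^ n k) \<le> M * x ^ k" .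
  qed
  then show ?thesis unfolding r_def .
qed

lemma gap_strict_mono:
  fixes n :: "nat \<Rightarrow> nat" and lam :: real
  assumes lam: "lam > 1" and gap: "\<forall>k. real (n (Suc k)) \<ge> lam * real (n k)"
    and pos: "\<forall>k. n k > 0"
  shows "strict_mono n"
  unfolding strict_mono_Suc_iff
proof
  fix k
  have "real (n k) < lam * real (n k)" using lam pos by simp
  then show "n k < n (Suc k)" using gap[rule_format, of k] by linarith
qed

lemma gap_series_two_sided_bound:
  fixes a :: "nat \<Rightarrow> complex" and n :: "nat \<Rightarrow> nat" and lam :: real
  assumes pos: "\<forall>k. n k > 0" and lam: "lam > 1"
    and gap: "\<forall>k. real (n (Suc k)) \<ge> lam * real (n k)"
    and conv: "\<forall>z\<in>ball 0 1. summable (\<lambda>k. a k * z ^ n k)"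
  obtains C :: real where "C > 0"
    and "\<And>B. \<forall>z\<in>ball 0 1. Re (\<Sum>k. a k * z ^ n k) \<le> B (norm z) \<Longrightarrow>
           \<forall>z\<in>ball 0 1. \<bar>Re (\<Sum>k. a k * z ^ n k)\<bar> \<le> C * B (norm z)"
proof -
  obtain C where C: "C > 0" and abs_sum: "\<And>a r B. 0 \<le> r \<Longrightarrow> summable (\<lambda>m. norm (a m) * r ^ n m) \<Longrightarrow>
      (\<forall>x. Re (\<Sum>m. a m * (complex_of_real r * cis x) ^ n m) \<le> B) \<Longrightarrow>
      (\<Sum>m. norm (a m) * r ^ n m) \<le> C * B"
    using gap_series_abs_sum_bound[OF lam gap pos] by blast
  have "\<bar>Re (\<Sum>k. a k * z ^ n k)\<bar> \<le> C * B (norm z)"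
    if upper: "\<forall>z\<in>ball 0 1. Re (\<Sum>k. a k * z ^ n k) \<le> B (norm z)" and z: "z \<in> ball 0 1"
    for B z
  proof -
    have summ: "summable (\<lambda>k. norm (a k) * norm z ^ n k)"
      using z gap_series_abs_summable[OF gap_strict_mono[OF lam gap pos] conv] by simp
    have "norm (complex_of_real (norm z) * cis x) = norm z" for x by (simp add: norm_mult)
    then have "\<forall>x. Re (\<Sum>m. a m * (complex_of_real (norm z) * cis x) ^ n m) \<le> B (norm z)"
      using upper z by (metis mem_ball_0)
    then have abs_sum_z: "(\<Sum>k. norm (a k) * norm z ^ n k) \<le> C * B (norm z)"
      using abs_sum[OF norm_ge_zero summ] by blast
    have "\<bar>Re (\<Sum>k. a k * z ^ n k)\<bar> \<le> norm (\<Sum>k. a k * z ^ n k)" by (rule abs_Re_le_cmod)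
    also have "\<dots> \<le> (\<Sum>k. norm (a k) * norm z ^ n k)"
      using summ by (intro norm_suminf_le) (auto simp: norm_mult norm_power)
    finally show ?thesis using abs_sum_z by simp
  qed
  with C that show thesis by blast
qed

theorem corollary3:
  fixes v :: "real \<Rightarrow> real" and a :: "nat \<Rightarrow> complex" and n :: "nat \<Rightarrow> nat"
    and lam :: real
  assumes "weight v" and "doubling v"
    and "\<forall>k. n k > 0"
    and "lam > 1" and "\<forall>k. real (n (Suc k)) \<ge> lam * real (n k)"
    and "\<forall>z\<in>ball 0 1. summable (\<lambda>k. a k * z ^ n k)"
  shows "(\<lambda>z. Re (\<Sum>k. a k * z ^ n k)) \<in> k_inf v \<longleftrightarrow>
         (\<lambda>z. Re (\<Sum>k. a k * z ^ n k)) \<in> h_inf v"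
proof
  assume "(\<lambda>z. Re (\<Sum>k. a k * z ^ n k)) \<in> h_inf v"
  then show "(\<lambda>z. Re (\<Sum>k. a k * z ^ n k)) \<in> k_inf v"
    unfolding h_inf_def k_inf_def by (auto dest: abs_le_D1)
next
  assume "(\<lambda>z. Re (\<Sum>k. a k * z ^ n k)) \<in> k_inf v"
  then obtain K where harm: "harmonic_on (ball 0 1) (\<lambda>z. Re (\<Sum>k. a k * z ^ n k))"
    and K: "K > 0" and upper: "\<forall>z\<in>ball 0 1. Re (\<Sum>k. a k * z ^ n k) \<le> K * v (norm z)"
    unfolding k_inf_def by auto
  obtain C where C: "C > 0" and two_sided: "\<And>B. \<forall>z\<in>ball 0 1. Re (\<Sum>k. a k * z ^ n k) \<le> B (norm z) \<Longrightarrow>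
      \<forall>z\<in>ball 0 1. \<bar>Re (\<Sum>k. a k * z ^ n k)\<bar> \<le> C * B (norm z)"
    using gap_series_two_sided_bound[OF assms(3-6)] by blast
  have "\<forall>z\<in>ball 0 1. \<bar>Re (\<Sum>k. a k * z ^ n k)\<bar> \<le> (C * K) * v (norm z)"
    using two_sided[of "\<lambda>r. K * v r"] upper by (simp add: mult.assoc)
  with harm C K show "(\<lambda>z. Re (\<Sum>k. a k * z ^ n k)) \<in> h_inf v"
    unfolding h_inf_def by (auto intro!: exI[of _ "C * K"])
qed

end
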